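(* For each of the three cases $d=2,4,8$ (the manifold of flags in the projective plane over $\mathbb C$, $\mathbb H$, $\mathbb O$), there exists a $G$-invariant metric on $M=G/K$ with positive definite Ricci tensor whose Ricci flow reaches, at some later time, a $G$-invariant metric whose Ricci tensor has signature $(d,2d)$, i.e. it has $d$ negative and $2d$ positive eigenvalues.
   Context: Let $(G,K,d)$ be one of the following three triples: - $(SU(3),T^2,2)$, with $T^2$ a maximal torus; - $(Sp(3),Sp(1)\times Sp(1)\times Sp(1),4)$; - (compact $F_4$, $Spin(8)$, $8$). Let $M=G/K$, a manifold of dimension $3d$. With the $\mathrm{Ad}(G)$-invariant inner product $\langle X,Y\rangle_0=-\tfrac12\mathrm{Re}\,\mathrm{tr}(XY)$ (for $F_4$, the invariant inner product agreeing with it on a compatibly embedded $Sp(3)$), let $\mathfrak p=\mathfrak k^\perp=V_1\oplus V_2\oplus V_3$ be the decomposition into three pairwise inequivalent irreducible $\mathrm{Ad}(K)$-invariant subspaces of dimension $d$. $G$-invariant metrics are $g\leftrightarrow(x_1,x_2,x_3)$, corresponding to $\sum_i x_i\langle\cdot,\cdot\rangle_0|_{V_i}$ with $x_i>0$. Their Ricci tensor is $\sum_i x_ir_i\langle\cdot,\cdot\rangle_0|_{V_i}$, where $$r_i=\frac{d x_i^2-d x_j^2-d x_k^2+(10d-8)x_jx_k}{2x_1x_2x_3},\qquad\{i,j,k\}=\{1,2,3\}.$$ The Ricci flow $\partial_tg=-2\mathrm{Ric}(g)$ on these metrics is the ODE system $\frac{dx_i}{dt}=-2r_ix_i$. *)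

theory Defs
  imports Complex_Main
begin

text \<open>Invariant metric g = (x1,x2,x3), i.e. sum x_i <.,.>_0 restricted to V_i, dim V_i = d.
  ric d a b c is r_i with x_i = a and {x_j,x_k} = {b,c} (symmetric in b,c).\<close>
definition ric :: "nat \<Rightarrow> real \<Rightarrow> real \<Rightarrow> real \<Rightarrow> real" where
  "ric d a b c = (real d * a^2 - real d * b^2 - real d * c^2 + (10 * real d - 8) * b * c)
                  / (2 * a * b * c)"

text \<open>Coefficients of the Ricci tensor w.r.t. <.,.>_0 on V_1, V_2, V_3:
  Ric = sum x_i r_i <.,.>_0|V_i.\<close>
definition ricci_coeffs :: "nat \<Rightarrow> real \<Rightarrow> real \<Rightarrow> real \<Rightarrow> real list" where
  "ricci_coeffs d x1 x2 x3 = [x1 * ric d x1 x2 x3, x2 * ric d x2 x1 x3, x3 * ric d x3 x1 x2]"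

definition ricci_pos_def :: "nat \<Rightarrow> real \<Rightarrow> real \<Rightarrow> real \<Rightarrow> bool" where
  "ricci_pos_def d x1 x2 x3 = (\<forall>c \<in> set (ricci_coeffs d x1 x2 x3). c > 0)"

text \<open>Signature (number of negative, number of positive eigenvalues) of the Ricci tensor:
  each block V_i has dimension d, on which Ric is a multiple of the inner product.\<close>
definition ricci_signature :: "nat \<Rightarrow> real \<Rightarrow> real \<Rightarrow> real \<Rightarrow> nat \<times> nat" where
  "ricci_signature d x1 x2 x3 =
     (d * length (filter (\<lambda>c. c < 0) (ricci_coeffs d x1 x2 x3)),
      d * length (filter (\<lambda>c. c > 0) (ricci_coeffs d x1 x2 x3)))"

definition ricci_flow_sol ::
  "nat \<Rightarrow> (real \<Rightarrow> real) \<Rightarrow> (real \<Rightarrow> real) \<Rightarrow> (real \<Rightarrow> real) \<Rightarrow> real \<Rightarrow> bool" where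
  "ricci_flow_sol d x1 x2 x3 T =
     (\<forall>t \<in> {0..T}. x1 t > 0 \<and> x2 t > 0 \<and> x3 t > 0 \<and>
        (x1 has_real_derivative (-2 * ric d (x1 t) (x2 t) (x3 t) * x1 t)) (at t within {0..T}) \<and>
        (x2 has_real_derivative (-2 * ric d (x2 t) (x1 t) (x3 t) * x2 t)) (at t within {0..T}) \<and>
        (x3 has_real_derivative (-2 * ric d (x3 t) (x1 t) (x2 t) * x3 t)) (at t within {0..T}))"

end

theory Submission
  imports Defs "HOL-Analysis.Analysis"
begin

(* Put N(a,b,c) = d a^2 - d b^2 - d c^2 + (10d-8) b c, so that the Ricci
   coefficient x_i r_i on V_i equals N(x_i,x_j,x_k) / (2 x_j x_k) and has the sign of
   N(x_i,x_j,x_k).  For each d we exhibit a point p with positive coordinates at which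
   N(p1,p2,p3) > 0, N(p2,p1,p3) > 0, N(p3,p1,p2) = 0 and at which N(x3,x1,x2) is strictly
   decreasing along the Ricci flow.  The solution through p, taken on a short interval
   [-s, s], then starts (time -s) at a metric of positive Ricci curvature and ends (time s)
   at a metric with exactly one negative Ricci block, i.e. signature (d,2d); shifting time
   by s gives the theorem. *)

text \<open>It is used twice: to extend
  curves on [-h,h] to bounded continuous functions on the whole line, and to make the Ricci
  field globally Lipschitz by keeping its arguments in a compact box.\<close>

definition clamp :: "real \<Rightarrow> real \<Rightarrow> real \<Rightarrow> real" where
  "clamp a b s = max a (min b s)"

lemma clamp_in: "a \<le> b \<Longrightarrow> clamp a b t \<in> {a..b}"
  by (auto simp: clamp_def)

lemma clamp_id: "t \<in> {a..b} \<Longrightarrow> clamp a b t = t"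
  by (auto simp: clamp_def)

lemma dist_clamp_le: "dist (clamp a b s) (clamp a b t) \<le> dist s t"
  by (auto simp: clamp_def dist_real_def)

lemma continuous_on_clamp: "continuous_on UNIV (clamp a b)"
  unfolding clamp_def by (intro continuous_intros)

lemma clamp_compose_bcontfun:
  fixes f :: "real \<Rightarrow> 'a::real_normed_vector"
  assumes f: "continuous_on {a..b} f" and ab: "a \<le> b"
  shows "(\<lambda>t. q + f (clamp a b t)) \<in> bcontfun"
proof -
  have "continuous_on UNIV (\<lambda>t. f (clamp a b t))"
    by (rule continuous_on_compose2[OF f continuous_on_clamp]) (use clamp_in ab in auto)
  then have cont: "continuous_on UNIV (\<lambda>t. q + f (clamp a b t))" by (intro continuous_intros)
  have "compact (f ` {a..b})" by (rule compact_continuous_image[OF f]) auto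
  then obtain B where B: "\<And>z. z \<in> f ` {a..b} \<Longrightarrow> norm z \<le> B"
    using compact_imp_bounded bounded_iff by metis
  have "norm (q + f (clamp a b t)) \<le> norm q + B" for t
    using norm_triangle_ineq[of q "f (clamp a b t)"] B[of "f (clamp a b t)"] clamp_in[OF ab]
    by fastforce
  with cont show ?thesis by (rule bcontfun_normI)
qed

section \<open>Local existence for globally Lipschitz autonomous ODEs\<close>

lemma integral_lipschitz_estimate:
  fixes G :: "'a::banach \<Rightarrow> 'a" and y z :: "real \<Rightarrow>\<^sub>C 'a"
  assumes lip: "L-lipschitz_on UNIV G" and au: "a \<le> u"
  shows "norm (integral {a..u} (\<lambda>s. G (apply_bcontfun y s)) - integral {a..u} (\<lambda>s. G (apply_bcontfun z s)))
           \<le> L * dist y z * (u - a)"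
proof -
  have L0: "L \<ge> 0" using lip lipschitz_on_nonneg by blast
  have contG: "continuous_on UNIV G" using lip lipschitz_on_continuous_on by blast
  have cont: "continuous_on {a..u} (\<lambda>s. G (apply_bcontfun w s))" for w :: "real \<Rightarrow>\<^sub>C 'a"
    by (rule continuous_on_compose2[OF contG]) auto
  have "integral {a..u} (\<lambda>s. G (apply_bcontfun y s)) - integral {a..u} (\<lambda>s. G (apply_bcontfun z s))
        = integral {a..u} (\<lambda>s. G (apply_bcontfun y s) - G (apply_bcontfun z s))"
    by (rule integral_diff[symmetric]; rule integrable_continuous_interval; rule cont)
  also have "norm \<dots> \<le> L * dist y z * (u - a)"
  proof (rule integral_bound[OF au])
    show "continuous_on {a..u} (\<lambda>s. G (apply_bcontfun y s) - G (apply_bcontfun z s))"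
      by (intro continuous_intros cont)
    fix s
    have "norm (G (apply_bcontfun y s) - G (apply_bcontfun z s))
          \<le> L * dist (apply_bcontfun y s) (apply_bcontfun z s)"
      using lip by (auto simp: dist_norm[symmetric] dest: lipschitz_onD)
    also have "\<dots> \<le> L * dist y z" using L0 dist_bounded by (intro mult_left_mono) auto
    finally show "norm (G (apply_bcontfun y s) - G (apply_bcontfun z s)) \<le> L * dist y z" .
  qed
  finally show ?thesis .
qed

text \<open>Picard-Lindeloef: a globally L-Lipschitz vector field G has a solution through any
  point on the time interval ]-h,h[ as soon as 4hL < 1.  The solution is the fixed point of
  the contraction y \<mapsto> p + integral from 0 to t of G(y), acting on bounded continuous
  functions, with time clamped to [-h,h].\<close>

lemma picard_lindeloef_global:
  fixes G :: "'a::banach \<Rightarrow> 'a"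
  assumes lip: "L-lipschitz_on UNIV G" and h: "h > 0" "4 * h * L < 1"
  obtains y where "y 0 = p" "\<And>t. -h < t \<Longrightarrow> t < h \<Longrightarrow> (y has_vector_derivative G (y t)) (at t)"
proof -
  have L0: "L \<ge> 0" using lip lipschitz_on_nonneg by blast
  have contG: "continuous_on UNIV G" using lip lipschitz_on_continuous_on by blast
  define c where "c = clamp (-h) h"
  have c_in: "c t \<in> {-h..h}" for t using h clamp_in[of "-h" h] by (simp add: c_def)
  have c_id: "t \<in> {-h..h} \<Longrightarrow> c t = t" for t by (simp add: c_def clamp_id)
  define I where "I y u = integral {-h..u} (\<lambda>s. G (apply_bcontfun y s))"
    for y :: "real \<Rightarrow>\<^sub>C 'a" and u
  have derI: "((I y) has_vector_derivative G (apply_bcontfun y u)) (at u within {-h..h})"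
    if "u \<in> {-h..h}" for y u
    unfolding I_def
    by (rule integral_has_vector_derivative[OF continuous_on_compose2[OF contG] that]) auto
  have contI: "continuous_on {-h..h} (I y)" for y
    using derI has_vector_derivative_continuous continuous_on_eq_continuous_within by blast
  define \<phi> where "\<phi> y t = (p - I y 0) + I y (c t)" for y t
  have "\<phi> y \<in> bcontfun" for y
    unfolding \<phi>_def c_def using clamp_compose_bcontfun[OF contI] h by simp
  then have \<phi>_apply: "apply_bcontfun (Bcontfun (\<phi> y)) t = \<phi> y t" for y t
    using Bcontfun_inverse by metis
  have I_lipschitz: "norm (I y u - I z u) \<le> (2 * h * L) * dist y z" if "u \<in> {-h..h}" for y z u
  proof -
    have "norm (I y u - I z u) \<le> L * dist y z * (u - -h)"
      unfolding I_def using that by (intro integral_lipschitz_estimate[OF lip]) auto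
    also have "\<dots> \<le> L * dist y z * (2 * h)"
      using that L0 by (intro mult_left_mono) auto
    finally show ?thesis by (simp add: algebra_simps)
  qed
  have contraction: "dist (Bcontfun (\<phi> y)) (Bcontfun (\<phi> z)) \<le> (4 * h * L) * dist y z" for y z
  proof (rule dist_bound)
    fix t
    have "dist (apply_bcontfun (Bcontfun (\<phi> y)) t) (apply_bcontfun (Bcontfun (\<phi> z)) t)
          = norm ((I y (c t) - I z (c t)) - (I y 0 - I z 0))"
      unfolding \<phi>_apply \<phi>_def dist_norm by (simp add: algebra_simps)
    also have "\<dots> \<le> norm (I y (c t) - I z (c t)) + norm (I y 0 - I z 0)"
      by (rule norm_triangle_ineq4)
    also have "\<dots> \<le> (2 * h * L) * dist y z + (2 * h * L) * dist y z"
      using I_lipschitz c_in h by (intro add_mono) auto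
    finally show "dist (apply_bcontfun (Bcontfun (\<phi> y)) t) (apply_bcontfun (Bcontfun (\<phi> z)) t)
        \<le> (4 * h * L) * dist y z"
      by (simp add: algebra_simps)
  qed
  obtain y where "Bcontfun (\<phi> y) = y"
    using banach_fix_type[of "4 * h * L" "\<lambda>y. Bcontfun (\<phi> y)"] contraction h L0 by auto
  then have y_eq: "apply_bcontfun y t = \<phi> y t" for t using \<phi>_apply by metis
  show ?thesis
  proof
    show "apply_bcontfun y 0 = p" using y_eq[of 0] h by (simp add: \<phi>_def c_id)
    fix t assume t: "-h < t" "t < h"
    then have t_in: "t \<in> {-h..h}" by auto
    have "((\<lambda>u. (p - I y 0) + I y u) has_vector_derivative G (apply_bcontfun y t)) (at t within {-h..h})"
      using derI[OF t_in] by (auto intro!: derivative_eq_intros)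
    then have "(apply_bcontfun y has_vector_derivative G (apply_bcontfun y t)) (at t within {-h..h})"
      by (rule has_vector_derivative_transform[OF t_in, rotated]) (simp add: y_eq \<phi>_def c_id)
    then have "(apply_bcontfun y has_vector_derivative G (apply_bcontfun y t)) (at t within {-h<..<h})"
      by (rule has_vector_derivative_within_subset) auto
    then show "(apply_bcontfun y has_vector_derivative G (apply_bcontfun y t)) (at t)"
      using at_within_open[of t "{-h<..<h}"] t by auto
  qed
qed

lemma continuous_stays_in_open:
  fixes y :: "real \<Rightarrow> 'a::topological_space"
  assumes "isCont y 0" "open U" "y 0 \<in> U"
  obtains \<delta> where "\<delta> > 0" "\<And>t. \<bar>t\<bar> < \<delta> \<Longrightarrow> y t \<in> U"
proof -
  have "\<forall>\<^sub>F t in at 0. y t \<in> U"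
    using topological_tendstoD[OF assms(1)[unfolded isCont_def] assms(2,3)] .
  then obtain \<delta> where "\<delta> > 0" "\<And>t. t \<noteq> 0 \<Longrightarrow> \<bar>t\<bar> < \<delta> \<Longrightarrow> y t \<in> U"
    unfolding eventually_at by (auto simp: dist_real_def)
  with assms(3) show ?thesis by (metis that)
qed

text \<open>Bounded Lipschitz real functions form an algebra, closed under inverses of functions
  bounded away from 0; this is how the Lipschitz property of the Ricci field is obtained.\<close>

definition bounded_lipschitz :: "('v::metric_space \<Rightarrow> real) \<Rightarrow> bool" where
  "bounded_lipschitz f \<longleftrightarrow> (\<exists>L. L-lipschitz_on UNIV f) \<and> (\<exists>B. \<forall>x. \<bar>f x\<bar> \<le> B)"

lemma bounded_lipschitzE:
  assumes "bounded_lipschitz f"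
  obtains L B where "L-lipschitz_on UNIV f" "\<And>x. \<bar>f x\<bar> \<le> B" "L \<ge> 0" "B \<ge> 0"
proof -
  obtain L B where "L-lipschitz_on UNIV f" "\<And>x. \<bar>f x\<bar> \<le> B"
    using assms unfolding bounded_lipschitz_def by blast
  moreover have "B \<ge> 0" using \<open>\<And>x. \<bar>f x\<bar> \<le> B\<close>[of undefined] by linarith
  ultimately show ?thesis using that lipschitz_on_nonneg by blast
qed

lemma bounded_lipschitz_const: "bounded_lipschitz (\<lambda>x. c)"
  unfolding bounded_lipschitz_def using lipschitz_on_constant by blast

lemma bounded_lipschitz_add:
  assumes "bounded_lipschitz f" "bounded_lipschitz g"
  shows "bounded_lipschitz (\<lambda>x. f x + g x)"
proof -
  obtain Lf Bf Lg Bg where f: "Lf-lipschitz_on UNIV f" "\<And>x. \<bar>f x\<bar> \<le> Bf"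
    and g: "Lg-lipschitz_on UNIV g" "\<And>x. \<bar>g x\<bar> \<le> Bg"
    using assms by (meson bounded_lipschitzE)
  have "(Lf + Lg)-lipschitz_on UNIV (\<lambda>x. f x + g x)" by (rule lipschitz_on_add[OF f(1) g(1)])
  moreover have "\<bar>f x + g x\<bar> \<le> Bf + Bg" for x using f(2)[of x] g(2)[of x] by linarith
  ultimately show ?thesis unfolding bounded_lipschitz_def by blast
qed

lemma bounded_lipschitz_diff:
  assumes "bounded_lipschitz f" "bounded_lipschitz g"
  shows "bounded_lipschitz (\<lambda>x. f x - g x)"
proof -
  obtain Lf Bf Lg Bg where f: "Lf-lipschitz_on UNIV f" "\<And>x. \<bar>f x\<bar> \<le> Bf"
    and g: "Lg-lipschitz_on UNIV g" "\<And>x. \<bar>g x\<bar> \<le> Bg"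
    using assms by (meson bounded_lipschitzE)
  have "(Lf + Lg)-lipschitz_on UNIV (\<lambda>x. f x - g x)" by (rule lipschitz_on_diff[OF f(1) g(1)])
  moreover have "\<bar>f x - g x\<bar> \<le> Bf + Bg" for x using f(2)[of x] g(2)[of x] by linarith
  ultimately show ?thesis unfolding bounded_lipschitz_def by blast
qed

text \<open>Product rule: |fg(x) - fg(y)| \<le> |f x| |g x - g y| + |g y| |f x - f y|.\<close>

lemma bounded_lipschitz_mult:
  assumes "bounded_lipschitz f" "bounded_lipschitz g"
  shows "bounded_lipschitz (\<lambda>x. f x * g x)"
proof -
  obtain Lf Bf where f: "Lf-lipschitz_on UNIV f" "\<And>x. \<bar>f x\<bar> \<le> Bf" "Lf \<ge> 0" "Bf \<ge> 0"
    using bounded_lipschitzE[OF assms(1)] by blast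
  obtain Lg Bg where g: "Lg-lipschitz_on UNIV g" "\<And>x. \<bar>g x\<bar> \<le> Bg" "Lg \<ge> 0" "Bg \<ge> 0"
    using bounded_lipschitzE[OF assms(2)] by blast
  have "(Bf * Lg + Bg * Lf)-lipschitz_on UNIV (\<lambda>x. f x * g x)"
  proof (rule lipschitz_onI)
    fix x y
    have "dist (f x * g x) (f y * g y) = \<bar>f x * (g x - g y) + g y * (f x - f y)\<bar>"
      by (simp add: dist_real_def algebra_simps)
    also have "\<dots> \<le> \<bar>f x\<bar> * \<bar>g x - g y\<bar> + \<bar>g y\<bar> * \<bar>f x - f y\<bar>"
      by (metis abs_mult abs_triangle_ineq)
    also have "\<dots> \<le> Bf * (Lg * dist x y) + Bg * (Lf * dist x y)"
      using f g lipschitz_onD[OF f(1), of x y] lipschitz_onD[OF g(1), of x y]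
      by (intro add_mono mult_mono) (auto simp: dist_real_def)
    finally show "dist (f x * g x) (f y * g y) \<le> (Bf * Lg + Bg * Lf) * dist x y"
      by (simp add: algebra_simps)
  qed (use f g in auto)
  moreover have "\<bar>f x * g x\<bar> \<le> Bf * Bg" for x
    using f(2)[of x] g(2)[of x] by (simp add: abs_mult mult_mono)
  ultimately show ?thesis unfolding bounded_lipschitz_def by blast
qed

text \<open>If f \<ge> a > 0 then |1/f x - 1/f y| \<le> |f x - f y| / a^2.\<close>

lemma bounded_lipschitz_inverse:
  assumes "bounded_lipschitz f" "a > 0" "\<And>x. f x \<ge> a"
  shows "bounded_lipschitz (\<lambda>x. inverse (f x))"
proof -
  obtain L B where f: "L-lipschitz_on UNIV f" "L \<ge> 0"
    using assms(1) by (rule bounded_lipschitzE)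
  have "(L / a^2)-lipschitz_on UNIV (\<lambda>x. inverse (f x))"
  proof (rule lipschitz_onI)
    fix x y
    have fa: "f x \<ge> a" "f y \<ge> a" using assms by auto
    then have pos: "f x > 0" "f y > 0" using assms(2) by linarith+
    have "dist (inverse (f x)) (inverse (f y)) = \<bar>f y - f x\<bar> / (f x * f y)"
      using pos by (simp add: dist_real_def field_simps abs_div)
    also have "\<dots> \<le> \<bar>f y - f x\<bar> / (a * a)"
      using pos fa assms(2) by (intro divide_left_mono mult_mono) auto
    also have "\<dots> \<le> (L * dist x y) / (a * a)"
      using lipschitz_onD[OF f(1), of x y]
      by (intro divide_right_mono) (auto simp: dist_real_def abs_minus_commute)
    finally show "dist (inverse (f x)) (inverse (f y)) \<le> L / a^2 * dist x y"
      by (simp add: power2_eq_square)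
  qed (use f(2) in auto)
  moreover have "\<bar>inverse (f x)\<bar> \<le> inverse a" for x
    using assms(2) assms(3)[of x] by (simp add: le_imp_inverse_le)
  ultimately show ?thesis unfolding bounded_lipschitz_def by blast
qed

lemma bounded_lipschitz_clamp:
  fixes p :: "'v::metric_space \<Rightarrow> real"
  assumes "1-lipschitz_on UNIV p"
  shows "bounded_lipschitz (\<lambda>x. clamp a b (p x))"
proof -
  have "1-lipschitz_on UNIV (\<lambda>x. clamp a b (p x))"
  proof (rule lipschitz_onI)
    fix x y
    have "dist (clamp a b (p x)) (clamp a b (p y)) \<le> dist (p x) (p y)"
      by (rule dist_clamp_le)
    then show "dist (clamp a b (p x)) (clamp a b (p y)) \<le> 1 * dist x y"
      using lipschitz_onD[OF assms, of x y] by simp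
  qed simp
  moreover have "\<bar>clamp a b (p x)\<bar> \<le> \<bar>a\<bar> + \<bar>b\<bar>" for x unfolding clamp_def by auto
  ultimately show ?thesis unfolding bounded_lipschitz_def by blast
qed

lemma lipschitz_fst: "1-lipschitz_on UNIV fst"
  by (rule lipschitz_onI) (auto simp: dist_fst_le)

lemma lipschitz_snd: "1-lipschitz_on UNIV snd"
  by (rule lipschitz_onI) (auto simp: dist_snd_le)

lemma lipschitz_snd_compose:
  assumes "1-lipschitz_on UNIV f"
  shows "1-lipschitz_on UNIV (\<lambda>u. f (snd u))"
  using lipschitz_on_compose2[OF lipschitz_snd lipschitz_on_subset[OF assms]] by simp

section \<open>The Ricci flow as an autonomous ODE on triples\<close>

definition ricci_field :: "nat \<Rightarrow> real \<times> real \<times> real \<Rightarrow> real \<times> real \<times> real" where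
  "ricci_field d x = (case x of (x1, x2, x3) \<Rightarrow>
     (-2 * ric d x1 x2 x3 * x1, -2 * ric d x2 x1 x3 * x2, -2 * ric d x3 x1 x2 * x3))"

lemma bounded_lipschitz_ricci_component:
  assumes f: "bounded_lipschitz f" and g: "bounded_lipschitz g" and k: "bounded_lipschitz k"
    and a: "a > 0" "\<And>x. f x \<ge> a" "\<And>x. g x \<ge> a" "\<And>x. k x \<ge> a"
  shows "bounded_lipschitz (\<lambda>x. -2 * ric d (f x) (g x) (k x) * f x)"
proof -
  note bl = bounded_lipschitz_add bounded_lipschitz_diff bounded_lipschitz_mult
    bounded_lipschitz_const
  have numerator: "bounded_lipschitz (\<lambda>x. real d * f x * f x - real d * g x * g x
      - real d * k x * k x + (10 * real d - 8) * g x * k x)"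
    by (intro bl f g k)
  have "2 * f x * g x * k x \<ge> 2 * a * a * a" for x
    using a(1) a(2-4)[of x] by (intro mult_mono mult_right_mono) auto
  moreover have "bounded_lipschitz (\<lambda>x. 2 * f x * g x * k x)" by (intro bl f g k)
  ultimately have "bounded_lipschitz (\<lambda>x. inverse (2 * f x * g x * k x))"
    using a(1) by (intro bounded_lipschitz_inverse[where a = "2 * a * a * a"]) auto
  then have "bounded_lipschitz (\<lambda>x. -2 * ((real d * f x * f x - real d * g x * g x
      - real d * k x * k x + (10 * real d - 8) * g x * k x) * inverse (2 * f x * g x * k x)) * f x)"
    by (intro bl numerator f)
  then show ?thesis
    by (simp only: ric_def divide_inverse power2_eq_square mult.assoc)
qed

lemma lipschitz_clamped_ricci_field:
  assumes "a > 0" "a \<le> b"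
  obtains L where "L-lipschitz_on UNIV
    (\<lambda>u :: real \<times> real \<times> real. ricci_field d (clamp a b (fst u), clamp a b (fst (snd u)),
      clamp a b (snd (snd u))))"
proof -
  define P1 where "P1 = (\<lambda>u :: real \<times> real \<times> real. clamp a b (fst u))"
  define P2 where "P2 = (\<lambda>u :: real \<times> real \<times> real. clamp a b (fst (snd u)))"
  define P3 where "P3 = (\<lambda>u :: real \<times> real \<times> real. clamp a b (snd (snd u)))"
  have P_ge: "P1 u \<ge> a" "P2 u \<ge> a" "P3 u \<ge> a" for u
    by (auto simp: P1_def P2_def P3_def clamp_def)
  have P: "bounded_lipschitz P1" "bounded_lipschitz P2" "bounded_lipschitz P3"
    unfolding P1_def P2_def P3_def
    by (rule bounded_lipschitz_clamp[OF lipschitz_fst]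
        bounded_lipschitz_clamp[OF lipschitz_snd_compose[OF lipschitz_fst]]
        bounded_lipschitz_clamp[OF lipschitz_snd_compose[OF lipschitz_snd]])+
  have "bounded_lipschitz (\<lambda>u. -2 * ric d (P1 u) (P2 u) (P3 u) * P1 u)"
    "bounded_lipschitz (\<lambda>u. -2 * ric d (P2 u) (P1 u) (P3 u) * P2 u)"
    "bounded_lipschitz (\<lambda>u. -2 * ric d (P3 u) (P1 u) (P2 u) * P3 u)"
    using bounded_lipschitz_ricci_component[OF P(1,2,3) assms(1) P_ge(1,2,3)]
      bounded_lipschitz_ricci_component[OF P(2,1,3) assms(1) P_ge(2,1,3)]
      bounded_lipschitz_ricci_component[OF P(3,1,2) assms(1) P_ge(3,1,2)] by blast+
  then obtain L1 L2 L3 where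
    "L1-lipschitz_on UNIV (\<lambda>u. -2 * ric d (P1 u) (P2 u) (P3 u) * P1 u)"
    "L2-lipschitz_on UNIV (\<lambda>u. -2 * ric d (P2 u) (P1 u) (P3 u) * P2 u)"
    "L3-lipschitz_on UNIV (\<lambda>u. -2 * ric d (P3 u) (P1 u) (P2 u) * P3 u)"
    unfolding bounded_lipschitz_def by blast
  from lipschitz_on_Pair[OF this(1) lipschitz_on_Pair[OF this(2,3)]] show ?thesis
    by (intro that) (simp add: ricci_field_def P1_def P2_def P3_def)
qed

text \<open>The solution of the clamped field
  stays in the open box where clamping is inactive for short times.\<close>

lemma ricci_flow_local_existence:
  assumes p: "p1 > 0" "p2 > 0" "p3 > 0"
  obtains h y where "h > 0" "y 0 = (p1, p2, p3)"
    "\<And>t. -h < t \<Longrightarrow> t < h \<Longrightarrow> (y has_vector_derivative ricci_field d (y t)) (at t)"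
proof -
  define a where "a = min p1 (min p2 p3) / 2"
  define b where "b = 2 * max p1 (max p2 p3)"
  have a0: "a > 0" and ab: "a \<le> b" using p by (auto simp: a_def b_def)
  define G where "G u = ricci_field d (clamp a b (fst u), clamp a b (fst (snd u)),
      clamp a b (snd (snd u)))" for u :: "real \<times> real \<times> real"
  obtain L where lip: "L-lipschitz_on UNIV G"
    using lipschitz_clamped_ricci_field[OF a0 ab] unfolding G_def by blast
  then have L0: "L \<ge> 0" by (rule lipschitz_on_nonneg)
  define h where "h = 1 / (8 * (L + 1))"
  have h0: "h > 0" and hL: "4 * h * L < 1" using L0 by (simp_all add: h_def field_simps)
  obtain y where y0: "y 0 = (p1, p2, p3)"
    and y': "\<And>t. -h < t \<Longrightarrow> t < h \<Longrightarrow> (y has_vector_derivative G (y t)) (at t)"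
    using picard_lindeloef_global[OF lip h0 hL] by blast
  define box where "box = {u :: real \<times> real \<times> real. a < fst u \<and> fst u < b
      \<and> a < fst (snd u) \<and> fst (snd u) < b \<and> a < snd (snd u) \<and> snd (snd u) < b}"
  have "open box" unfolding box_def by (intro open_Collect_conj open_Collect_less continuous_intros)
  moreover have "y 0 \<in> box" using p y0 by (auto simp: box_def a_def b_def)
  moreover have "isCont y 0" using y'[of 0] h0 has_vector_derivative_continuous by auto
  ultimately obtain \<delta> where \<delta>: "\<delta> > 0" "\<And>t. \<bar>t\<bar> < \<delta> \<Longrightarrow> y t \<in> box"
    by (metis continuous_stays_in_open)
  have G_box: "G u = ricci_field d u" if "u \<in> box" for u
    using that by (cases u) (auto simp: G_def box_def clamp_def)
  show ?thesis
  proof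
    show "min h \<delta> > 0" using h0 \<delta>(1) by simp
    fix t assume "- min h \<delta> < t" "t < min h \<delta>"
    then show "(y has_vector_derivative ricci_field d (y t)) (at t)"
      using y'[of t] G_box[OF \<delta>(2)[of t]] by auto
  qed (fact y0)
qed

definition ricci_numerator :: "nat \<Rightarrow> real \<Rightarrow> real \<Rightarrow> real \<Rightarrow> real" where
  "ricci_numerator d a b c = real d * a^2 - real d * b^2 - real d * c^2 + (10 * real d - 8) * b * c"

lemma ricci_coeff_eq: "a > 0 \<Longrightarrow> b > 0 \<Longrightarrow> c > 0 \<Longrightarrow> a * ric d a b c = ricci_numerator d a b c / (2 * b * c)"
  unfolding ric_def ricci_numerator_def by (simp add: field_simps)

lemma ricci_coeff_pos:
  "a > 0 \<Longrightarrow> b > 0 \<Longrightarrow> c > 0 \<Longrightarrow> ricci_numerator d a b c > 0 \<Longrightarrow> a * ric d a b c > 0"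
  by (simp add: ricci_coeff_eq)

lemma ricci_coeff_neg:
  "a > 0 \<Longrightarrow> b > 0 \<Longrightarrow> c > 0 \<Longrightarrow> ricci_numerator d a b c < 0 \<Longrightarrow> a * ric d a b c < 0"
  by (simp add: ricci_coeff_eq divide_neg_pos)

text \<open>The numerator of the Ricci coefficient on V_3, and its rate of change along a curve
  through x with velocity v.\<close>

definition third_numerator :: "nat \<Rightarrow> real \<times> real \<times> real \<Rightarrow> real" where
  "third_numerator d x = (case x of (x1, x2, x3) \<Rightarrow> ricci_numerator d x3 x1 x2)"

definition numerator_rate :: "nat \<Rightarrow> real \<times> real \<times> real \<Rightarrow> real \<times> real \<times> real \<Rightarrow> real" where
  "numerator_rate d x v = (case (x, v) of ((x1, x2, x3), (v1, v2, v3)) \<Rightarrow>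
     2 * real d * x3 * v3 - 2 * real d * x1 * v1 - 2 * real d * x2 * v2
     + (10 * real d - 8) * (v1 * x2 + x1 * v2))"

lemma third_numerator_eq:
  "third_numerator d x = ricci_numerator d (snd (snd x)) (fst x) (fst (snd x))"
  by (cases x) (simp add: third_numerator_def)

lemma has_vector_derivative_triple:
  fixes y :: "real \<Rightarrow> real \<times> real \<times> real"
  assumes "(y has_vector_derivative v) F"
  shows "((\<lambda>t. fst (y t)) has_real_derivative fst v) F"
    "((\<lambda>t. fst (snd (y t))) has_real_derivative fst (snd v)) F"
    "((\<lambda>t. snd (snd (y t))) has_real_derivative snd (snd v)) F"
  using has_derivative_fst[OF assms[unfolded has_vector_derivative_def]]
    has_derivative_fst[OF has_derivative_snd[OF assms[unfolded has_vector_derivative_def]]]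
    has_derivative_snd[OF has_derivative_snd[OF assms[unfolded has_vector_derivative_def]]]
  by (simp_all add: has_real_derivative_iff_has_vector_derivative has_vector_derivative_def)

lemma third_numerator_derivative:
  fixes y :: "real \<Rightarrow> real \<times> real \<times> real"
  assumes "(y has_vector_derivative v) (at t)"
  shows "((\<lambda>t. third_numerator d (y t)) has_real_derivative numerator_rate d (y t) v) (at t)"
proof -
  note y' = has_vector_derivative_triple[OF assms]
  show ?thesis
    unfolding third_numerator_eq ricci_numerator_def
    by (rule derivative_eq_intros y' refl)+
      (simp add: numerator_rate_def split: prod.split, simp add: algebra_simps)
qed

definition first_blocks_positive :: "nat \<Rightarrow> (real \<times> real \<times> real) set" where
  "first_blocks_positive d = {(x1, x2, x3). 0 < x1 \<and> 0 < x2 \<and> 0 < x3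
     \<and> 0 < ricci_numerator d x1 x2 x3 \<and> 0 < ricci_numerator d x2 x1 x3}"

lemma first_blocks_positive_iff:
  "u \<in> first_blocks_positive d \<longleftrightarrow> 0 < fst u \<and> 0 < fst (snd u) \<and> 0 < snd (snd u)
      \<and> 0 < ricci_numerator d (fst u) (fst (snd u)) (snd (snd u))
      \<and> 0 < ricci_numerator d (fst (snd u)) (fst u) (snd (snd u))"
  by (cases u) (simp add: first_blocks_positive_def)

lemma open_first_blocks_positive: "open (first_blocks_positive d)"
proof -
  have "first_blocks_positive d = {u. 0 < fst u \<and> 0 < fst (snd u) \<and> 0 < snd (snd u)
      \<and> 0 < ricci_numerator d (fst u) (fst (snd u)) (snd (snd u))
      \<and> 0 < ricci_numerator d (fst (snd u)) (fst u) (snd (snd u))}"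
    by (auto simp: first_blocks_positive_iff)
  then show ?thesis unfolding ricci_numerator_def
    by (simp only:) (intro open_Collect_conj open_Collect_less continuous_intros)
qed

lemma ricci_flow_sol_shift:
  fixes y :: "real \<Rightarrow> real \<times> real \<times> real"
  assumes y': "\<And>t. -h < t \<Longrightarrow> t < h \<Longrightarrow> (y has_vector_derivative ricci_field d (y t)) (at t)"
    and pos: "\<And>t. -s \<le> t \<Longrightarrow> t \<le> s \<Longrightarrow> 0 < fst (y t) \<and> 0 < fst (snd (y t)) \<and> 0 < snd (snd (y t))"
    and s: "s < h"
  shows "ricci_flow_sol d (\<lambda>t. fst (y (t - s))) (\<lambda>t. fst (snd (y (t - s))))
           (\<lambda>t. snd (snd (y (t - s)))) (2 * s)"
  unfolding ricci_flow_sol_def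
proof (intro ballI conjI)
  fix t assume t: "t \<in> {0..2 * s}"
  then show "0 < fst (y (t - s))" "0 < fst (snd (y (t - s)))" "0 < snd (snd (y (t - s)))"
    using pos[of "t - s"] by auto
  have "((\<lambda>t. t - s) has_vector_derivative 1) (at t)"
    by (auto intro!: derivative_eq_intros)
  moreover have "(y has_vector_derivative ricci_field d (y (t - s))) (at (t - s))"
    using t s by (intro y') auto
  ultimately have "((\<lambda>t. y (t - s)) has_vector_derivative ricci_field d (y (t - s))) (at t)"
    using vector_diff_chain_at by (fastforce simp: o_def)
  note y'_shift = has_vector_derivative_triple[OF this, THEN has_field_derivative_at_within]
  obtain x1 x2 x3 where "y (t - s) = (x1, x2, x3)" by (cases "y (t - s)")
  with y'_shift show
    "((\<lambda>t. fst (y (t - s))) has_real_derivative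
       -2 * ric d (fst (y (t - s))) (fst (snd (y (t - s)))) (snd (snd (y (t - s)))) * fst (y (t - s)))
       (at t within {0..2 * s})"
    "((\<lambda>t. fst (snd (y (t - s)))) has_real_derivative
       -2 * ric d (fst (snd (y (t - s)))) (fst (y (t - s))) (snd (snd (y (t - s)))) * fst (snd (y (t - s))))
       (at t within {0..2 * s})"
    "((\<lambda>t. snd (snd (y (t - s)))) has_real_derivative
       -2 * ric d (snd (snd (y (t - s)))) (fst (y (t - s))) (fst (snd (y (t - s)))) * snd (snd (y (t - s))))
       (at t within {0..2 * s})"
    by (simp_all add: ricci_field_def)
qed

section \<open>The sign change of the Ricci tensor along the flow\<close>

lemma ricci_flow_signature_change_on_curve:
  fixes y :: "real \<Rightarrow> real \<times> real \<times> real"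
  assumes y': "\<And>t. -h < t \<Longrightarrow> t < h \<Longrightarrow> (y has_vector_derivative ricci_field d (y t)) (at t)"
    and s: "0 < s" "s < h"
    and blocks: "\<And>t. -s \<le> t \<Longrightarrow> t \<le> s \<Longrightarrow> y t \<in> first_blocks_positive d"
    and start: "third_numerator d (y (-s)) > 0" and final: "third_numerator d (y s) < 0"
  shows "\<exists>x1 x2 x3 :: real \<Rightarrow> real. \<exists>T > 0.
           ricci_flow_sol d x1 x2 x3 T \<and>
           ricci_pos_def d (x1 0) (x2 0) (x3 0) \<and>
           ricci_signature d (x1 T) (x2 T) (x3 T) = (d, 2 * d)"
proof -
  define x1 where "x1 t = fst (y (t - s))" for t
  define x2 where "x2 t = fst (snd (y (t - s)))" for t
  define x3 where "x3 t = snd (snd (y (t - s)))" for t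
  have pos: "0 < fst (y t) \<and> 0 < fst (snd (y t)) \<and> 0 < snd (snd (y t))"
    if "-s \<le> t" "t \<le> s" for t
    using blocks[OF that] by (simp add: first_blocks_positive_iff)
  have flow: "ricci_flow_sol d x1 x2 x3 (2 * s)"
    unfolding x1_def[abs_def] x2_def[abs_def] x3_def[abs_def]
    by (rule ricci_flow_sol_shift[OF y' pos s(2)])
  have "0 < x1 0" "0 < x2 0" "0 < x3 0" "0 < ricci_numerator d (x1 0) (x2 0) (x3 0)"
    "0 < ricci_numerator d (x2 0) (x1 0) (x3 0)" "0 < ricci_numerator d (x3 0) (x1 0) (x2 0)"
    using blocks[of "-s"] start s(1)
    by (auto simp: first_blocks_positive_iff third_numerator_eq x1_def x2_def x3_def)
  then have "ricci_pos_def d (x1 0) (x2 0) (x3 0)"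
    unfolding ricci_pos_def_def ricci_coeffs_def by (simp add: ricci_coeff_pos)
  moreover have "0 < x1 (2 * s)" "0 < x2 (2 * s)" "0 < x3 (2 * s)"
    "0 < ricci_numerator d (x1 (2 * s)) (x2 (2 * s)) (x3 (2 * s))"
    "0 < ricci_numerator d (x2 (2 * s)) (x1 (2 * s)) (x3 (2 * s))"
    "ricci_numerator d (x3 (2 * s)) (x1 (2 * s)) (x2 (2 * s)) < 0"
    using blocks[of s] final s(1)
    by (auto simp: first_blocks_positive_iff third_numerator_eq x1_def x2_def x3_def)
  then have "0 < x1 (2 * s) * ric d (x1 (2 * s)) (x2 (2 * s)) (x3 (2 * s))"
    "0 < x2 (2 * s) * ric d (x2 (2 * s)) (x1 (2 * s)) (x3 (2 * s))"
    "x3 (2 * s) * ric d (x3 (2 * s)) (x1 (2 * s)) (x2 (2 * s)) < 0"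
    by (simp_all add: ricci_coeff_pos ricci_coeff_neg)
  then have "ricci_signature d (x1 (2 * s)) (x2 (2 * s)) (x3 (2 * s)) = (d, 2 * d)"
    unfolding ricci_signature_def ricci_coeffs_def by simp
  ultimately have "2 * s > 0 \<and> ricci_flow_sol d x1 x2 x3 (2 * s) \<and> ricci_pos_def d (x1 0) (x2 0) (x3 0)
      \<and> ricci_signature d (x1 (2 * s)) (x2 (2 * s)) (x3 (2 * s)) = (d, 2 * d)"
    using flow s(1) by simp
  then show ?thesis by blast
qed

text \<open>The solution through p supplies the curve
  required above, for s small: by continuity it stays in the open region where V_1, V_2 are
  positive, and the V_3 numerator changes sign at time 0.\<close>

lemma ricci_flow_signature_change:
  assumes p: "p1 > 0" "p2 > 0" "p3 > 0"
    and N1: "ricci_numerator d p1 p2 p3 > 0" and N2: "ricci_numerator d p2 p1 p3 > 0"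
    and N3: "ricci_numerator d p3 p1 p2 = 0"
    and rate: "numerator_rate d (p1, p2, p3) (ricci_field d (p1, p2, p3)) < 0"
  shows "\<exists>x1 x2 x3 :: real \<Rightarrow> real. \<exists>T > 0.
           ricci_flow_sol d x1 x2 x3 T \<and>
           ricci_pos_def d (x1 0) (x2 0) (x3 0) \<and>
           ricci_signature d (x1 T) (x2 T) (x3 T) = (d, 2 * d)"
proof -
  obtain h y where h: "h > 0" and y0: "y 0 = (p1, p2, p3)"
    and y': "\<And>t. -h < t \<Longrightarrow> t < h \<Longrightarrow> (y has_vector_derivative ricci_field d (y t)) (at t)"
    using ricci_flow_local_existence[OF p] by blast
  have "isCont y 0" using y'[of 0] h has_vector_derivative_continuous by auto
  moreover have "y 0 \<in> first_blocks_positive d" using p N1 N2 y0 by (simp add: first_blocks_positive_iff)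
  ultimately obtain \<delta> where \<delta>: "\<delta> > 0" "\<And>t. \<bar>t\<bar> < \<delta> \<Longrightarrow> y t \<in> first_blocks_positive d"
    by (metis continuous_stays_in_open open_first_blocks_positive)
  define g where "g t = third_numerator d (y t)" for t
  have g': "(g has_real_derivative numerator_rate d (p1, p2, p3) (ricci_field d (p1, p2, p3))) (at 0)"
    unfolding g_def using third_numerator_derivative[OF y'[of 0]] h y0 by simp
  have g0: "g 0 = 0" using N3 y0 by (simp add: g_def third_numerator_eq)
  obtain d1 where d1: "d1 > 0" "\<And>t. 0 < t \<Longrightarrow> t < d1 \<Longrightarrow> g t < 0"
    using DERIV_neg_dec_right[OF g' rate] g0 by auto
  obtain d2 where d2: "d2 > 0" "\<And>t. 0 < t \<Longrightarrow> t < d2 \<Longrightarrow> g (- t) > 0"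
    using DERIV_neg_dec_left[OF g' rate] g0 by auto
  define s where "s = min (min d1 d2) (min \<delta> h) / 2"
  have s: "s > 0" "s < d1" "s < d2" "s < \<delta>" "s < h"
    using d1(1) d2(1) \<delta>(1) h by (auto simp: s_def)
  show ?thesis
  proof (rule ricci_flow_signature_change_on_curve[OF y' s(1,5)])
    show "y t \<in> first_blocks_positive d" if "-s \<le> t" "t \<le> s" for t
      using that s by (intro \<delta>(2)) auto
    show "third_numerator d (y (-s)) > 0" using d2(2)[OF s(1,3)] by (simp add: g_def)
    show "third_numerator d (y s) < 0" using d1(2)[OF s(1,2)] by (simp add: g_def)
  qed
qed

theorem theorem4p1:
  fixes d :: nat
  assumes "d \<in> {2, 4, 8}"
  shows "\<exists>x1 x2 x3 :: real \<Rightarrow> real. \<exists>T > 0.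
           ricci_flow_sol d x1 x2 x3 T \<and>
           ricci_pos_def d (x1 0) (x2 0) (x3 0) \<and>
           ricci_signature d (x1 T) (x2 T) (x3 T) = (d, 2 * d)"
proof -
  consider "d = 2" | "d = 4" | "d = 8" using assms by auto
  then show ?thesis
  proof cases
    case 1
    show ?thesis unfolding 1
      by (rule ricci_flow_signature_change[of 3 28 17])
        (simp_all add: ricci_numerator_def numerator_rate_def ricci_field_def ric_def)
  next
    case 2
    show ?thesis unfolding 2
      by (rule ricci_flow_signature_change[of 1 12 7])
        (simp_all add: ricci_numerator_def numerator_rate_def ricci_field_def ric_def)
  next
    case 3
    show ?thesis unfolding 3
      by (rule ricci_flow_signature_change[of 1 24 19])
        (simp_all add: ricci_numerator_def numerator_rate_def ricci_field_def ric_def)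
  qed
qed

end
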